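(* Let $\kappa_{rg}\in[0,1)$ and $\epsilon\in(0,1)$, and let $k_\epsilon=\lceil\epsilon^{-2}\rceil$. Consider the (inexact) Newton method on $\mathbb{R}^2$: $z_{k+1}=z_k+\sigma_k$ with $\nabla^2h(z_k)\sigma_k=-\nabla h(z_k)+r_k$, where each component of $r_k$ is bounded in absolute value by $\kappa_{rg}$ times the absolute value of the corresponding component of $\nabla h(z_k)$ (in particular $r_k=0$ is allowed). Then there exists a twice continuously differentiable function $h^N_\epsilon:\mathbb{R}^2\to\mathbb{R}$ with globally Lipschitz continuous gradient and with values in a bounded interval independent of $\epsilon$, such that, when this method is applied to $h^N_\epsilon$ from $z_0=(0,0)$: the Hessians $\nabla^2h^N_\epsilon(z_k)$ are positive definite, the Hessian of $h^N_\epsilon$ is Lipschitz continuous on each segment $[z_k,z_{k+1}]$, $k=0,\dots,k_\epsilon-1$, with a Lipschitz constant independent of $\epsilon$ and $k$, $\|\nabla h^N_\epsilon(z_k)\|>\epsilon$ for $k<k_\epsilon$, and $\|\nabla h^N_\epsilon(z_{k_\epsilon})\|\le\epsilon\sqrt{1+\epsilon^2}$.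
   Context: $\|\cdot\|$ denotes the Euclidean norm. *)

theory Defs
  imports "HOL-Analysis.Analysis"
begin

definition pos_def_mat :: "real^'n^'n \<Rightarrow> bool" where
  "pos_def_mat A \<longleftrightarrow> (\<forall>v. v \<noteq> 0 \<longrightarrow> 0 < v \<bullet> (A *v v))"

text \<open>The residual of the inexact Newton step is written componentwise as
  r_k,i = theta_k,i * grad h(z_k)_i with |theta_k,i| <= kappa; this is exactly the
  condition |r_k,i| <= kappa |grad h(z_k)_i|.\<close>
definition admissible_residuals :: "real \<Rightarrow> (nat \<Rightarrow> real^2) \<Rightarrow> bool" where
  "admissible_residuals \<kappa> \<theta> \<longleftrightarrow> (\<forall>k i. \<bar>\<theta> k $ i\<bar> \<le> \<kappa>)"

definition inexact_newton_run ::
  "(real^2 \<Rightarrow> real^2) \<Rightarrow> (real^2 \<Rightarrow> real^2^2) \<Rightarrow> (nat \<Rightarrow> real^2) \<Rightarrow> (nat \<Rightarrow> real^2) \<Rightarrow> nat \<Rightarrow> bool"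
  where
  "inexact_newton_run g H \<theta> z n \<longleftrightarrow>
     z 0 = 0 \<and>
     (\<forall>k<n. H (z k) *v (z (Suc k) - z k) = - g (z k) + (\<chi> i. \<theta> k $ i * g (z k) $ i))"

end

theory Submission
  imports Defs
begin

text \<open>
  Newton's method applied to a separable function \<open>h(x, y) = p(x) - cos y\<close> from the origin stays
  on the \<open>x\<close>-axis, and its \<open>k\<close>-th step depends only on \<open>p'(k)\<close> and \<open>p''(k)\<close>. Building \<open>p\<close> by
  Hermite interpolation from integer translates of the \<open>C\<^sup>3\<close> bump \<open>(1 - t\<^sup>2)\<^sub>+\<^sup>4\<close>, we prescribe
  \<open>p'(k) = -1\<close> and \<open>p''(k) = 1 - \<theta>\<^sub>k\<close> for \<open>k < k\<^sub>\<epsilon>\<close> and \<open>p'(k\<^sub>\<epsilon>) = 0\<close>: every inexact Newton step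
  then has length one, so the gradient has norm 1 at the first \<open>k\<^sub>\<epsilon>\<close> iterates and vanishes at
  \<open>z\<^sub>k\<^sub>\<epsilon>\<close>. At most two translates are nonzero at any point, so \<open>p\<close> and its derivatives are bounded
  independently of \<open>\<epsilon>\<close>, which yields the uniform range and Lipschitz constants.
\<close>

definition truncated_power :: "nat \<Rightarrow> real \<Rightarrow> real" where
  "truncated_power n u = max 0 u ^ n"

lemma has_real_derivative_truncated_power:
  assumes "2 \<le> n"
  shows "(truncated_power n has_real_derivative real n * truncated_power (n - 1) u) (at u)"
proof -
  consider "u < 0" | "u = 0" | "0 < u" by linarith
  then show ?thesis
  proof cases
    case 1
    have vanish: "truncated_power m x = 0" if "x < 0" "0 < m" for x m
      using that by (simp add: truncated_power_def)
    have "((\<lambda>_. 0) has_real_derivative real n * truncated_power (n - 1) u) (at u)"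
      using vanish[OF 1] assms by simp
    then show ?thesis
      by (rule has_field_derivative_transform_within_open[where S = "{..<0}"])
         (use 1 assms vanish in auto)
  next
    case 2
    have quotient_bound: "\<bar>truncated_power n h / h\<bar> \<le> \<bar>h\<bar> ^ (n - 1)" for h
    proof (cases "h = 0")
      case False
      have "\<bar>truncated_power n h\<bar> \<le> \<bar>h\<bar> ^ n"
        by (auto simp: truncated_power_def power_abs intro: power_mono)
      also have "\<dots> = \<bar>h\<bar> * \<bar>h\<bar> ^ (n - 1)"
        using assms by (simp flip: power_Suc)
      finally show ?thesis
        using False by (simp add: field_simps)
    qed simp
    have "((\<lambda>h. \<bar>h\<bar> ^ (n - 1)) \<longlongrightarrow> 0) (at (0::real))"
      using assms by (auto intro!: tendsto_eq_intros)
    moreover have "\<forall>\<^sub>F h in at 0. norm (truncated_power n h / h) \<le> \<bar>h\<bar> ^ (n - 1)"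
      using quotient_bound by (simp add: always_eventually)
    ultimately have "((\<lambda>h. truncated_power n h / h) \<longlongrightarrow> 0) (at 0)"
      by (rule Lim_null_comparison[rotated])
    then show ?thesis
      using 2 assms by (simp add: DERIV_def truncated_power_def power_0_left)
  next
    case 3
    have "((\<lambda>x. x ^ n) has_real_derivative real n * truncated_power (n - 1) u) (at u)"
      using 3 by (auto intro!: derivative_eq_intros simp: truncated_power_def)
    then show ?thesis
      by (rule has_field_derivative_transform_within_open[where S = "{0<..}"])
         (use 3 in \<open>auto simp: truncated_power_def\<close>)
  qed
qed

lemma has_real_derivative_truncated_power_comp [derivative_intros]:
  "2 \<le> n \<Longrightarrow> (f has_real_derivative f') (at t) \<Longrightarrow>
    ((\<lambda>t. truncated_power n (f t)) has_real_derivative real n * truncated_power (n - 1) (f t) * f') (at t)"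
  using DERIV_chain2[OF has_real_derivative_truncated_power] by blast

definition bump :: "real \<Rightarrow> real" where
  "bump t = truncated_power 4 (1 - t\<^sup>2)"

definition bump' :: "real \<Rightarrow> real" where
  "bump' t = - 8 * t * truncated_power 3 (1 - t\<^sup>2)"

definition bump'' :: "real \<Rightarrow> real" where
  "bump'' t = - 8 * truncated_power 3 (1 - t\<^sup>2) + 48 * t\<^sup>2 * truncated_power 2 (1 - t\<^sup>2)"

definition bump''' :: "real \<Rightarrow> real" where
  "bump''' t = 144 * t * truncated_power 2 (1 - t\<^sup>2) - 192 * t ^ 3 * truncated_power 1 (1 - t\<^sup>2)"

lemma has_real_derivative_bump: "(bump has_real_derivative bump' t) (at t)"
  unfolding bump_def bump'_def
  by (rule derivative_eq_intros refl | simp)+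

lemma has_real_derivative_bump': "(bump' has_real_derivative bump'' t) (at t)"
  unfolding bump'_def bump''_def
  by (rule derivative_eq_intros refl | simp)+ (simp add: algebra_simps power2_eq_square)

lemma has_real_derivative_bump'': "(bump'' has_real_derivative bump''' t) (at t)"
  unfolding bump''_def bump'''_def
  by (rule derivative_eq_intros refl | simp)+ (simp add: algebra_simps power2_eq_square power3_eq_cube)

lemma isCont_bump: "isCont bump' t" "isCont bump'' t" "isCont bump''' t"
proof -
  show "isCont bump' t" "isCont bump'' t"
    using has_real_derivative_bump' has_real_derivative_bump''
    by (blast intro: DERIV_isCont)+
  show "isCont bump''' t"
    unfolding bump'''_def truncated_power_def by (intro continuous_intros)
qed

lemma bump_vanishes:
  assumes "1 \<le> \<bar>t\<bar>"
  shows "bump t = 0" "bump' t = 0" "bump'' t = 0" "bump''' t = 0"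
proof -
  have "1 \<le> t\<^sup>2"
    using assms abs_le_square_iff[of 1 t] by simp
  then show "bump t = 0" "bump' t = 0" "bump'' t = 0" "bump''' t = 0"
    by (simp_all add: bump_def bump'_def bump''_def bump'''_def truncated_power_def)
qed

definition slope_basis :: "real \<Rightarrow> real" where "slope_basis t = t * bump t"
definition slope_basis' :: "real \<Rightarrow> real" where "slope_basis' t = bump t + t * bump' t"
definition slope_basis'' :: "real \<Rightarrow> real" where "slope_basis'' t = 2 * bump' t + t * bump'' t"
definition slope_basis''' :: "real \<Rightarrow> real" where "slope_basis''' t = 3 * bump'' t + t * bump''' t"

definition curv_basis :: "real \<Rightarrow> real" where "curv_basis t = t\<^sup>2 * bump t / 2"
definition curv_basis' :: "real \<Rightarrow> real" where "curv_basis' t = t * bump t + t\<^sup>2 * bump' t / 2"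
definition curv_basis'' :: "real \<Rightarrow> real" where
  "curv_basis'' t = bump t + 2 * t * bump' t + t\<^sup>2 * bump'' t / 2"
definition curv_basis''' :: "real \<Rightarrow> real" where
  "curv_basis''' t = 3 * bump' t + 3 * t * bump'' t + t\<^sup>2 * bump''' t / 2"

lemmas bump_derivative_intros [derivative_intros] =
  DERIV_chain2[OF has_real_derivative_bump]
  DERIV_chain2[OF has_real_derivative_bump']
  DERIV_chain2[OF has_real_derivative_bump'']

lemma has_real_derivative_slope_basis:
  "(slope_basis has_real_derivative slope_basis' t) (at t)"
  "(slope_basis' has_real_derivative slope_basis'' t) (at t)"
  "(slope_basis'' has_real_derivative slope_basis''' t) (at t)"
  unfolding slope_basis_def slope_basis'_def slope_basis''_def slope_basis'''_def
  by (auto intro!: derivative_eq_intros simp: algebra_simps)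

lemma has_real_derivative_curv_basis:
  "(curv_basis has_real_derivative curv_basis' t) (at t)"
  "(curv_basis' has_real_derivative curv_basis'' t) (at t)"
  "(curv_basis'' has_real_derivative curv_basis''' t) (at t)"
  unfolding curv_basis_def curv_basis'_def curv_basis''_def curv_basis'''_def
  by (auto intro!: derivative_eq_intros simp: algebra_simps power2_eq_square)

lemma isCont_basis:
  "isCont slope_basis t" "isCont slope_basis'' t" "isCont slope_basis''' t"
  "isCont curv_basis t" "isCont curv_basis'' t" "isCont curv_basis''' t"
proof -
  show "isCont slope_basis t" "isCont slope_basis'' t" "isCont curv_basis t" "isCont curv_basis'' t"
    using has_real_derivative_slope_basis has_real_derivative_curv_basis
    by (blast intro: DERIV_isCont)+
  show "isCont slope_basis''' t" "isCont curv_basis''' t"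
    unfolding slope_basis'''_def curv_basis'''_def by (auto intro!: continuous_intros isCont_bump)
qed

lemma basis_vanishes:
  assumes "1 \<le> \<bar>t\<bar>"
  shows "slope_basis t = 0" "slope_basis' t = 0" "slope_basis'' t = 0" "slope_basis''' t = 0"
    and "curv_basis t = 0" "curv_basis' t = 0" "curv_basis'' t = 0" "curv_basis''' t = 0"
  using bump_vanishes[OF assms]
  by (simp_all add: slope_basis_def slope_basis'_def slope_basis''_def slope_basis'''_def
      curv_basis_def curv_basis'_def curv_basis''_def curv_basis'''_def)

lemma basis_at_integers:
  fixes k j :: nat
  shows "slope_basis' (real k - real j) = (if j = k then 1 else 0)"
    and "slope_basis'' (real k - real j) = 0"
    and "curv_basis' (real k - real j) = 0"
    and "curv_basis'' (real k - real j) = (if j = k then 1 else 0)"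
proof -
  have "j = k \<or> 1 \<le> \<bar>real k - real j\<bar>"
    by auto
  then show "slope_basis' (real k - real j) = (if j = k then 1 else 0)"
    and "slope_basis'' (real k - real j) = 0"
    and "curv_basis' (real k - real j) = 0"
    and "curv_basis'' (real k - real j) = (if j = k then 1 else 0)"
    using basis_vanishes[of "real k - real j"]
    by (auto simp: slope_basis'_def slope_basis''_def curv_basis'_def curv_basis''_def
        bump_def bump'_def truncated_power_def)
qed

definition hermite_sum ::
  "(real \<Rightarrow> real) \<Rightarrow> (real \<Rightarrow> real) \<Rightarrow> (nat \<Rightarrow> real) \<Rightarrow> (nat \<Rightarrow> real) \<Rightarrow> nat \<Rightarrow> real \<Rightarrow> real"
  where "hermite_sum E F c a N x = (\<Sum>j\<le>N. c j * E (x - real j) + a j * F (x - real j))"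

lemma has_real_derivative_hermite_sum:
  assumes "\<And>t. (E has_real_derivative E' t) (at t)" "\<And>t. (F has_real_derivative F' t) (at t)"
  shows "(hermite_sum E F c a N has_real_derivative hermite_sum E' F' c a N x) (at x)"
  unfolding hermite_sum_def
  by (auto intro!: derivative_eq_intros DERIV_chain2[OF assms(1)] DERIV_chain2[OF assms(2)]
      simp: mult.commute)

lemma hermite_sum_at_integers:
  assumes "k \<le> N"
  shows "hermite_sum slope_basis' curv_basis' c a N (real k) = c k"
    and "hermite_sum slope_basis'' curv_basis'' c a N (real k) = a k"
proof -
  have "hermite_sum slope_basis' curv_basis' c a N (real k) = (\<Sum>j\<le>N. if j = k then c k else 0)"
    unfolding hermite_sum_def by (rule sum.cong) (auto simp: basis_at_integers)
  then show "hermite_sum slope_basis' curv_basis' c a N (real k) = c k"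
    using assms by simp
  have "hermite_sum slope_basis'' curv_basis'' c a N (real k) = (\<Sum>j\<le>N. if j = k then a k else 0)"
    unfolding hermite_sum_def by (rule sum.cong) (auto simp: basis_at_integers)
  then show "hermite_sum slope_basis'' curv_basis'' c a N (real k) = a k"
    using assms by simp
qed

lemma abs_sum_le_two_nearby:
  fixes w :: "nat \<Rightarrow> real"
  assumes "finite J" "\<And>j. \<bar>w j\<bar> \<le> W" "\<And>j. w j \<noteq> 0 \<Longrightarrow> \<bar>x - real j\<bar> < 1"
  shows "\<bar>\<Sum>j\<in>J. w j\<bar> \<le> 2 * W"
proof -
  define T where "T = {nat \<lfloor>x\<rfloor>, Suc (nat \<lfloor>x\<rfloor>)}"
  have "j \<in> T" if "w j \<noteq> 0" for j
  proof -
    have "\<bar>x - real j\<bar> < 1"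
      using assms(3) that .
    then have "\<lfloor>x\<rfloor> - 1 < int j" "int j < \<lfloor>x\<rfloor> + 2"
      by linarith+
    then show ?thesis
      unfolding T_def by auto
  qed
  then have "\<bar>\<Sum>j\<in>J. w j\<bar> = \<bar>\<Sum>j\<in>J \<inter> T. w j\<bar>"
    using assms(1) by (auto intro!: arg_cong[where f = abs] sum.mono_neutral_right)
  also have "\<dots> \<le> (\<Sum>j\<in>J \<inter> T. \<bar>w j\<bar>)"
    by (rule sum_abs)
  also have "\<dots> \<le> (\<Sum>j\<in>T. \<bar>w j\<bar>)"
    by (rule sum_mono2) (auto simp: T_def)
  also have "\<dots> \<le> 2 * W"
    using assms(2)[of "nat \<lfloor>x\<rfloor>"] assms(2)[of "Suc (nat \<lfloor>x\<rfloor>)"] by (simp add: T_def)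
  finally show ?thesis .
qed

lemma bounded_if_isCont_and_vanishing:
  fixes f :: "real \<Rightarrow> real"
  assumes "\<And>t. isCont f t" "\<And>t. 1 \<le> \<bar>t\<bar> \<Longrightarrow> f t = 0"
  obtains B where "\<And>t. \<bar>f t\<bar> \<le> B"
proof -
  obtain B where B: "\<And>t. -1 \<le> t \<Longrightarrow> t \<le> 1 \<Longrightarrow> \<bar>f t\<bar> \<le> B"
    using isCont_bounded[of "-1" 1 "\<lambda>t. \<bar>f t\<bar>"] assms(1) by (auto intro: continuous_intros)
  have "\<bar>f t\<bar> \<le> B" for t
    using B[of t] B[of 0] assms(2)[of t] by (cases "1 \<le> \<bar>t\<bar>") auto
  then show thesis
    by (rule that)
qed

lemma hermite_sum_uniformly_bounded:
  assumes "\<And>t. isCont E t" "\<And>t. isCont F t"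
    and "\<And>t. 1 \<le> \<bar>t\<bar> \<Longrightarrow> E t = 0" "\<And>t. 1 \<le> \<bar>t\<bar> \<Longrightarrow> F t = 0"
  shows "\<exists>B. \<forall>c a N x. (\<forall>j. \<bar>c j\<bar> \<le> C \<and> \<bar>a j\<bar> \<le> A) \<longrightarrow> \<bar>hermite_sum E F c a N x\<bar> \<le> B"
proof -
  obtain BE BF where BE: "\<And>t. \<bar>E t\<bar> \<le> BE" and BF: "\<And>t. \<bar>F t\<bar> \<le> BF"
    using bounded_if_isCont_and_vanishing assms by metis
  have "\<bar>hermite_sum E F c a N x\<bar> \<le> 2 * (C * BE + A * BF)"
    if ca: "\<forall>j. \<bar>c j\<bar> \<le> C \<and> \<bar>a j\<bar> \<le> A" for c a N x
    unfolding hermite_sum_def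
  proof (rule abs_sum_le_two_nearby)
    fix j
    have "\<bar>c j * E (x - real j) + a j * F (x - real j)\<bar> \<le> \<bar>c j\<bar> * \<bar>E (x - real j)\<bar> + \<bar>a j\<bar> * \<bar>F (x - real j)\<bar>"
      by (metis abs_mult abs_triangle_ineq)
    also have "\<dots> \<le> C * BE + A * BF"
      using ca BE BF by (intro add_mono mult_mono) auto
    finally show "\<bar>c j * E (x - real j) + a j * F (x - real j)\<bar> \<le> C * BE + A * BF" .
  next
    fix j
    show "\<bar>x - real j\<bar> < 1" if "c j * E (x - real j) + a j * F (x - real j) \<noteq> 0"
      using that assms(3,4) by (metis add.right_neutral mult_zero_right not_less)
  qed simp
  then show ?thesis
    by blast
qed

lemma hermite_basis_sums_uniformly_bounded:
  "\<exists>B. \<forall>c a N x. (\<forall>j. \<bar>c j\<bar> \<le> C \<and> \<bar>a j\<bar> \<le> A) \<longrightarrow>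
    \<bar>hermite_sum slope_basis curv_basis c a N x\<bar> \<le> B \<and>
    \<bar>hermite_sum slope_basis'' curv_basis'' c a N x\<bar> \<le> B \<and>
    \<bar>hermite_sum slope_basis''' curv_basis''' c a N x\<bar> \<le> B"
proof -
  obtain B0 B2 B3 where
    "\<forall>c a N x. (\<forall>j. \<bar>c j\<bar> \<le> C \<and> \<bar>a j\<bar> \<le> A) \<longrightarrow> \<bar>hermite_sum slope_basis curv_basis c a N x\<bar> \<le> B0"
    "\<forall>c a N x. (\<forall>j. \<bar>c j\<bar> \<le> C \<and> \<bar>a j\<bar> \<le> A) \<longrightarrow> \<bar>hermite_sum slope_basis'' curv_basis'' c a N x\<bar> \<le> B2"
    "\<forall>c a N x. (\<forall>j. \<bar>c j\<bar> \<le> C \<and> \<bar>a j\<bar> \<le> A) \<longrightarrow> \<bar>hermite_sum slope_basis''' curv_basis''' c a N x\<bar> \<le> B3"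
    using hermite_sum_uniformly_bounded[where E = slope_basis and F = curv_basis and C = C and A = A,
        OF isCont_basis(1,4) basis_vanishes(1,5)]
      hermite_sum_uniformly_bounded[where E = slope_basis'' and F = curv_basis'' and C = C and A = A,
        OF isCont_basis(2,5) basis_vanishes(3,7)]
      hermite_sum_uniformly_bounded[where E = slope_basis''' and F = curv_basis''' and C = C and A = A,
        OF isCont_basis(3,6) basis_vanishes(4,8)]
    by blast
  then show ?thesis
    by (intro exI[of _ "max B0 (max B2 B3)"]) (meson max.coboundedI1 max.coboundedI2)
qed

definition basis_sum_bound :: real where
  "basis_sum_bound = (SOME B. \<forall>c a N x. (\<forall>j. \<bar>c j\<bar> \<le> 1 \<and> \<bar>a j\<bar> \<le> 2) \<longrightarrow>
    \<bar>hermite_sum slope_basis curv_basis c a N x\<bar> \<le> B \<and>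
    \<bar>hermite_sum slope_basis'' curv_basis'' c a N x\<bar> \<le> B \<and>
    \<bar>hermite_sum slope_basis''' curv_basis''' c a N x\<bar> \<le> B)"

lemma abs_hermite_basis_sum_le:
  assumes "\<forall>j. \<bar>c j\<bar> \<le> 1 \<and> \<bar>a j\<bar> \<le> 2"
  shows "\<bar>hermite_sum slope_basis curv_basis c a N x\<bar> \<le> basis_sum_bound"
    and "\<bar>hermite_sum slope_basis'' curv_basis'' c a N x\<bar> \<le> basis_sum_bound"
    and "\<bar>hermite_sum slope_basis''' curv_basis''' c a N x\<bar> \<le> basis_sum_bound"
proof -
  have "\<forall>c a N x. (\<forall>j. \<bar>c j\<bar> \<le> 1 \<and> \<bar>a j\<bar> \<le> 2) \<longrightarrow>
      \<bar>hermite_sum slope_basis curv_basis c a N x\<bar> \<le> basis_sum_bound \<and>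
      \<bar>hermite_sum slope_basis'' curv_basis'' c a N x\<bar> \<le> basis_sum_bound \<and>
      \<bar>hermite_sum slope_basis''' curv_basis''' c a N x\<bar> \<le> basis_sum_bound"
    unfolding basis_sum_bound_def by (rule someI_ex[OF hermite_basis_sums_uniformly_bounded])
  then show "\<bar>hermite_sum slope_basis curv_basis c a N x\<bar> \<le> basis_sum_bound"
    and "\<bar>hermite_sum slope_basis'' curv_basis'' c a N x\<bar> \<le> basis_sum_bound"
    and "\<bar>hermite_sum slope_basis''' curv_basis''' c a N x\<bar> \<le> basis_sum_bound"
    using assms by blast+
qed

definition separable_fun :: "(real \<Rightarrow> real) \<Rightarrow> real^2 \<Rightarrow> real" where
  "separable_fun p x = p (x$1) - cos (x$2)"

definition separable_grad :: "(real \<Rightarrow> real) \<Rightarrow> real^2 \<Rightarrow> real^2" where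
  "separable_grad p' x = p' (x$1) *\<^sub>R axis 1 1 + sin (x$2) *\<^sub>R axis 2 1"

definition separable_hess :: "(real \<Rightarrow> real) \<Rightarrow> real^2 \<Rightarrow> real^2^2" where
  "separable_hess p'' x = p'' (x$1) *\<^sub>R axis 1 (axis 1 1) + cos (x$2) *\<^sub>R axis 2 (axis 2 1)"

lemma separable_grad_nth [simp]: "separable_grad p' x $ 1 = p' (x$1)" "separable_grad p' x $ 2 = sin (x$2)"
  by (simp_all add: separable_grad_def axis_def)

lemma separable_hess_mult_nth [simp]:
  "(separable_hess p'' x *v v) $ 1 = p'' (x$1) * v$1" "(separable_hess p'' x *v v) $ 2 = cos (x$2) * v$2"
  by (simp_all add: separable_hess_def matrix_vector_mult_def sum_2 axis_def)

lemma vec2_eq_iff: "(x::real^2) = y \<longleftrightarrow> x$1 = y$1 \<and> x$2 = y$2"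
  by (simp add: vec_eq_iff forall_2)

lemma has_derivative_nth_comp:
  "(f has_real_derivative f') (at (x$i)) \<Longrightarrow>
    ((\<lambda>x. f (x$i)) has_derivative (\<lambda>v. v$i * f')) (at x)"
  by (rule DERIV_compose_FDERIV[OF _ bounded_linear_imp_has_derivative[OF bounded_linear_vec_nth]])

lemma has_derivative_separable_fun:
  assumes "\<And>t. (p has_real_derivative p' t) (at t)"
  shows "(separable_fun p has_derivative (\<lambda>v. separable_grad p' x \<bullet> v)) (at x)"
proof -
  have "(separable_fun p has_derivative (\<lambda>v. v$1 * p' (x$1) - v$2 * (- sin (x$2)))) (at x)"
    unfolding separable_fun_def
    by (intro has_derivative_diff has_derivative_nth_comp assms DERIV_cos)
  then show ?thesis
    by (rule has_derivative_eq_rhs) (simp add: fun_eq_iff inner_vec_def sum_2 mult.commute)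
qed

lemma has_derivative_separable_grad:
  assumes "\<And>t. (p' has_real_derivative p'' t) (at t)"
  shows "(separable_grad p' has_derivative (\<lambda>v. separable_hess p'' x *v v)) (at x)"
proof -
  have "(separable_grad p' has_derivative
      (\<lambda>v. (v$1 * p'' (x$1)) *\<^sub>R axis 1 1 + (v$2 * cos (x$2)) *\<^sub>R axis 2 1)) (at x)"
    unfolding separable_grad_def
    by (intro has_derivative_add has_derivative_scaleR_left has_derivative_nth_comp assms DERIV_sin)
  then show ?thesis
    by (rule has_derivative_eq_rhs) (simp add: fun_eq_iff vec2_eq_iff axis_def)
qed

lemma continuous_on_separable_hess:
  assumes "\<And>t. isCont p'' t"
  shows "continuous_on UNIV (separable_hess p'')"
proof -
  have "isCont (\<lambda>x. p'' (x$1)) x" for x :: "real^2"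
    by (rule isCont_o2[OF _ assms]) (intro continuous_intros)
  then show ?thesis
    unfolding separable_hess_def by (intro continuous_at_imp_continuous_on ballI continuous_intros)
qed

lemma lipschitz_on_separable_grad:
  assumes "\<And>t. (p' has_real_derivative p'' t) (at t)" "\<And>t. \<bar>p'' t\<bar> \<le> B"
  shows "(B + 1)-lipschitz_on UNIV (separable_grad p')"
proof (rule lipschitz_onI)
  have "0 \<le> B"
    using assms(2)[of 0] by linarith
  then show "0 \<le> B + 1"
    by simp
  fix x y :: "real^2"
  have components: "\<bar>x$1 - y$1\<bar> \<le> dist x y" "\<bar>x$2 - y$2\<bar> \<le> dist x y"
    using component_le_norm_cart[of "x - y"] by (auto simp: dist_norm)
  have "dist (separable_grad p' x) (separable_grad p' y) \<le> \<bar>p' (x$1) - p' (y$1)\<bar> + \<bar>sin (x$2) - sin (y$2)\<bar>"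
    using norm_le_l1_cart[of "separable_grad p' x - separable_grad p' y"] by (simp add: dist_norm sum_2)
  also have "\<dots> \<le> B * \<bar>x$1 - y$1\<bar> + 1 * \<bar>x$2 - y$2\<bar>"
    using field_differentiable_bound[of UNIV p' p'' B] assms
      field_differentiable_bound[of UNIV sin cos 1 "x$2" "y$2"] DERIV_sin abs_cos_le_one
    by (intro add_mono) (auto simp: real_norm_def)
  also have "\<dots> \<le> B * dist x y + 1 * dist x y"
    using \<open>0 \<le> B\<close> components by (intro add_mono mult_left_mono) auto
  finally show "dist (separable_grad p' x) (separable_grad p' y) \<le> (B + 1) * dist x y"
    by (simp add: algebra_simps)
qed

lemma lipschitz_on_separable_hess_axis:
  assumes "\<And>t. (p'' has_real_derivative p''' t) (at t)" "\<And>t. \<bar>p''' t\<bar> \<le> B"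
    and "S \<subseteq> {x. x$2 = 0}"
  shows "B-lipschitz_on S (separable_hess p'')"
proof (rule lipschitz_onI)
  fix x y assume "x \<in> S" "y \<in> S"
  with assms(3) have "x$2 = 0" "y$2 = 0"
    by auto
  then have "separable_hess p'' x - separable_hess p'' y = (p'' (x$1) - p'' (y$1)) *\<^sub>R axis 1 (axis 1 1)"
    by (simp add: separable_hess_def algebra_simps)
  then have "dist (separable_hess p'' x) (separable_hess p'' y) = \<bar>p'' (x$1) - p'' (y$1)\<bar>"
    by (simp add: dist_norm)
  also have "\<dots> \<le> B * \<bar>x$1 - y$1\<bar>"
    using field_differentiable_bound[of UNIV p'' p''' B] assms(1,2) by auto
  also have "\<dots> \<le> B * dist x y"
    using component_le_norm_cart[of "x - y" 1] assms(2)[of 0]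
    by (intro mult_left_mono) (auto simp: dist_norm)
  finally show "dist (separable_hess p'' x) (separable_hess p'' y) \<le> B * dist x y" .
next
  show "0 \<le> B"
    using assms(2)[of 0] by linarith
qed

lemma pos_def_separable_hess:
  assumes "0 < p'' (x$1)" "x$2 = 0"
  shows "pos_def_mat (separable_hess p'' x)"
  unfolding pos_def_mat_def
proof (intro allI impI)
  fix v :: "real^2" assume "v \<noteq> 0"
  then have "v$1 \<noteq> 0 \<or> v$2 \<noteq> 0"
    by (simp add: vec2_eq_iff)
  then have "0 < p'' (x$1) * (v$1)\<^sup>2 + (v$2)\<^sup>2"
    using assms(1) by (auto intro: add_pos_nonneg add_nonneg_pos)
  then show "0 < v \<bullet> (separable_hess p'' x *v v)"
    using assms(2) by (simp add: inner_vec_def sum_2 power2_eq_square algebra_simps)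
qed

lemma abs_separable_fun_le:
  assumes "\<And>t. \<bar>p t\<bar> \<le> B"
  shows "\<bar>separable_fun p x\<bar> \<le> B + 1"
  using assms[of "x$1"] abs_cos_le_one[of "x$2"] unfolding separable_fun_def by linarith

lemma norm_separable_grad_axis: "norm (separable_grad p' (vector [t, 0])) = \<bar>p' t\<bar>"
  by (simp add: separable_grad_def)

lemma closed_segment_axis_subset: "closed_segment (vector [s, 0]) (vector [t, 0]) \<subseteq> {x :: real^2. x$2 = 0}"
  by (auto simp: closed_segment_def)

lemma inexact_newton_run_separable_iff:
  assumes unit_step: "\<And>k. k < N \<Longrightarrow> p'' (real k) = (\<theta> k $ 1 - 1) * p' (real k)"
    and nondegenerate: "\<And>k. k < N \<Longrightarrow> p'' (real k) \<noteq> 0"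
  shows "inexact_newton_run (separable_grad p') (separable_hess p'') \<theta> z N \<longleftrightarrow> (\<forall>k\<le>N. z k = vector [real k, 0])"
proof -
  have step_iff: "separable_hess p'' (vector [real k, 0]) *v (w - vector [real k, 0]) =
      - separable_grad p' (vector [real k, 0]) + (\<chi> i. \<theta> k $ i * separable_grad p' (vector [real k, 0]) $ i)
    \<longleftrightarrow> w = vector [real (Suc k), 0]" if "k < N" for k and w :: "real^2"
  proof -
    have "separable_hess p'' (vector [real k, 0]) *v (w - vector [real k, 0]) =
        - separable_grad p' (vector [real k, 0]) + (\<chi> i. \<theta> k $ i * separable_grad p' (vector [real k, 0]) $ i)
      \<longleftrightarrow> p'' (real k) * (w$1 - real k) = p'' (real k) * 1 \<and> w$2 = 0"
      using unit_step[OF that] by (auto simp: vec2_eq_iff algebra_simps)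
    also have "\<dots> \<longleftrightarrow> w = vector [real (Suc k), 0]"
      using nondegenerate[OF that] by (auto simp: vec2_eq_iff)
    finally show ?thesis .
  qed
  show ?thesis
  proof
    assume run: "inexact_newton_run (separable_grad p') (separable_hess p'') \<theta> z N"
    show "\<forall>k\<le>N. z k = vector [real k, 0]"
    proof (intro allI impI)
      fix k assume "k \<le> N"
      then show "z k = vector [real k, 0]"
      proof (induction k)
        case 0
        then show ?case
          using run by (simp add: inexact_newton_run_def vec2_eq_iff)
      next
        case (Suc k)
        then have "k < N" and z_k: "z k = vector [real k, 0]"
          by auto
        have "separable_hess p'' (z k) *v (z (Suc k) - z k) =
            - separable_grad p' (z k) + (\<chi> i. \<theta> k $ i * separable_grad p' (z k) $ i)"
          using run \<open>k < N\<close> unfolding inexact_newton_run_def by blast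
        then show ?case
          using step_iff[OF \<open>k < N\<close>] unfolding z_k by blast
      qed
    qed
  next
    assume on_axis: "\<forall>k\<le>N. z k = vector [real k, 0]"
    show "inexact_newton_run (separable_grad p') (separable_hess p'') \<theta> z N"
      unfolding inexact_newton_run_def
    proof (intro conjI allI impI)
      show "z 0 = 0"
        using on_axis by (simp add: vec2_eq_iff)
      fix k assume "k < N"
      then show "separable_hess p'' (z k) *v (z (Suc k) - z k) =
          - separable_grad p' (z k) + (\<chi> i. \<theta> k $ i * separable_grad p' (z k) $ i)"
        using step_iff[OF \<open>k < N\<close>, of "z (Suc k)"] on_axis by simp
    qed
  qed
qed

lemma inexact_newton_slow_instance:
  fixes \<epsilon> :: real and \<theta> :: "nat \<Rightarrow> real^2"
  assumes "0 < \<epsilon>" "\<epsilon> < 1" and \<theta>: "\<And>k. \<bar>\<theta> k $ 1\<bar> < 1"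
  shows "let k\<epsilon> = nat \<lceil>1 / \<epsilon>\<^sup>2\<rceil> in
    \<exists>(h::real^2 \<Rightarrow> real) (g::real^2 \<Rightarrow> real^2) (H::real^2 \<Rightarrow> real^2^2) (Lg::real).
      (\<forall>x. (h has_derivative (\<lambda>v. g x \<bullet> v)) (at x)) \<and>
      (\<forall>x. (g has_derivative (\<lambda>v. H x *v v)) (at x)) \<and>
      continuous_on UNIV H \<and>
      Lg-lipschitz_on UNIV g \<and>
      (\<forall>x. - basis_sum_bound - 1 \<le> h x \<and> h x \<le> basis_sum_bound + 1) \<and>
      (\<exists>z. inexact_newton_run g H \<theta> z k\<epsilon>) \<and>
      (\<forall>z. inexact_newton_run g H \<theta> z k\<epsilon> \<longrightarrow>
         (\<forall>k\<le>k\<epsilon>. pos_def_mat (H (z k))) \<and>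
         (\<forall>k<k\<epsilon>. basis_sum_bound-lipschitz_on (closed_segment (z k) (z (Suc k))) H) \<and>
         (\<forall>k<k\<epsilon>. norm (g (z k)) > \<epsilon>) \<and>
         norm (g (z k\<epsilon>)) \<le> \<epsilon> * sqrt (1 + \<epsilon>\<^sup>2))"
proof -
  define N where "N = nat \<lceil>1 / \<epsilon>\<^sup>2\<rceil>"
  define c where "c j = (if j < N then -1 else 0 :: real)" for j
  define a where "a j = (if j < N then 1 - \<theta> j $ 1 else 1)" for j
  have coeff_le: "\<bar>c j\<bar> \<le> 1" "\<bar>a j\<bar> \<le> 2" and a_pos: "0 < a j" for j
    using \<theta>[of j] by (auto simp: c_def a_def abs_less_iff)
  then have coeff_bounds: "\<forall>j. \<bar>c j\<bar> \<le> 1 \<and> \<bar>a j\<bar> \<le> 2"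
    by simp
  let ?B = basis_sum_bound
  let ?p = "hermite_sum slope_basis curv_basis c a N"
  let ?p' = "hermite_sum slope_basis' curv_basis' c a N"
  let ?p'' = "hermite_sum slope_basis'' curv_basis'' c a N"
  let ?p''' = "hermite_sum slope_basis''' curv_basis''' c a N"
  have p_deriv:
    "(?p has_real_derivative ?p' t) (at t)"
    "(?p' has_real_derivative ?p'' t) (at t)"
    "(?p'' has_real_derivative ?p''' t) (at t)" for t
    by (rule has_real_derivative_hermite_sum has_real_derivative_slope_basis
        has_real_derivative_curv_basis)+
  have p_bounds: "\<bar>?p t\<bar> \<le> ?B" "\<bar>?p'' t\<bar> \<le> ?B" "\<bar>?p''' t\<bar> \<le> ?B" for t
    using coeff_bounds by (rule abs_hermite_basis_sum_le)+
  have run_iff: "inexact_newton_run (separable_grad ?p') (separable_hess ?p'') \<theta> z N \<longleftrightarrow>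
      (\<forall>k\<le>N. z k = vector [real k, 0])" for z
  proof (rule inexact_newton_run_separable_iff)
    fix k assume "k < N"
    then show "?p'' (real k) = (\<theta> k $ 1 - 1) * ?p' (real k)" "?p'' (real k) \<noteq> 0"
      using a_pos[of k] by (simp_all add: hermite_sum_at_integers a_def c_def)
  qed
  show ?thesis
    unfolding Let_def N_def[symmetric]
  proof (intro exI[of _ "separable_fun ?p"] exI[of _ "separable_grad ?p'"]
      exI[of _ "separable_hess ?p''"] exI[of _ "?B + 1"] conjI allI impI)
    show "(separable_fun ?p has_derivative (\<lambda>v. separable_grad ?p' x \<bullet> v)) (at x)" for x
      using p_deriv(1) by (rule has_derivative_separable_fun)
    show "(separable_grad ?p' has_derivative (\<lambda>v. separable_hess ?p'' x *v v)) (at x)" for x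
      using p_deriv(2) by (rule has_derivative_separable_grad)
    show "continuous_on UNIV (separable_hess ?p'')"
      using p_deriv(3) by (intro continuous_on_separable_hess DERIV_isCont)
    show "(?B + 1)-lipschitz_on UNIV (separable_grad ?p')"
      using p_deriv(2) p_bounds(2) by (rule lipschitz_on_separable_grad)
    show "- ?B - 1 \<le> separable_fun ?p x" "separable_fun ?p x \<le> ?B + 1" for x
      using abs_separable_fun_le[of ?p ?B x, OF p_bounds(1)] by (auto simp: abs_le_iff)
    show "\<exists>z. inexact_newton_run (separable_grad ?p') (separable_hess ?p'') \<theta> z N"
      using run_iff[of "\<lambda>k. vector [real k, 0]"] by blast
    fix z assume "inexact_newton_run (separable_grad ?p') (separable_hess ?p'') \<theta> z N"
    then have on_axis: "\<forall>k\<le>N. z k = vector [real k, 0]"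
      using run_iff[of z] by blast
    show "pos_def_mat (separable_hess ?p'' (z k))" if "k \<le> N" for k
      using that on_axis a_pos[of k]
      by (intro pos_def_separable_hess) (simp_all add: hermite_sum_at_integers)
    show "?B-lipschitz_on (closed_segment (z k) (z (Suc k))) (separable_hess ?p'')" if "k < N" for k
      using p_deriv(3) p_bounds(3)
    proof (rule lipschitz_on_separable_hess_axis)
      show "closed_segment (z k) (z (Suc k)) \<subseteq> {x. x$2 = 0}"
        using that on_axis closed_segment_axis_subset by simp
    qed
    show "\<epsilon> < norm (separable_grad ?p' (z k))" if "k < N" for k
      using that on_axis assms(2) by (simp add: norm_separable_grad_axis hermite_sum_at_integers c_def)
    show "norm (separable_grad ?p' (z N)) \<le> \<epsilon> * sqrt (1 + \<epsilon>\<^sup>2)"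
      using on_axis assms(1) by (simp add: norm_separable_grad_axis hermite_sum_at_integers c_def)
  qed
qed

theorem theorem3p3:
  fixes \<kappa> :: real
  assumes "0 \<le> \<kappa>" and "\<kappa> < 1"
  shows "\<exists>lo hi LH::real. \<forall>\<epsilon>::real. \<forall>\<theta>::nat \<Rightarrow> real^2.
     0 < \<epsilon> \<and> \<epsilon> < 1 \<and> admissible_residuals \<kappa> \<theta> \<longrightarrow>
     (let k\<epsilon> = nat \<lceil>1 / \<epsilon>\<^sup>2\<rceil> in
      \<exists>(h::real^2 \<Rightarrow> real) (g::real^2 \<Rightarrow> real^2) (H::real^2 \<Rightarrow> real^2^2) (Lg::real).
        (\<forall>x. (h has_derivative (\<lambda>v. g x \<bullet> v)) (at x)) \<and>
        (\<forall>x. (g has_derivative (\<lambda>v. H x *v v)) (at x)) \<and>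
        continuous_on UNIV H \<and>
        Lg-lipschitz_on UNIV g \<and>
        (\<forall>x. lo \<le> h x \<and> h x \<le> hi) \<and>
        (\<exists>z. inexact_newton_run g H \<theta> z k\<epsilon>) \<and>
        (\<forall>z. inexact_newton_run g H \<theta> z k\<epsilon> \<longrightarrow>
           (\<forall>k\<le>k\<epsilon>. pos_def_mat (H (z k))) \<and>
           (\<forall>k<k\<epsilon>. LH-lipschitz_on (closed_segment (z k) (z (Suc k))) H) \<and>
           (\<forall>k<k\<epsilon>. norm (g (z k)) > \<epsilon>) \<and>
           norm (g (z k\<epsilon>)) \<le> \<epsilon> * sqrt (1 + \<epsilon>\<^sup>2)))"
proof (rule exI[of _ "- basis_sum_bound - 1"], rule exI[of _ "basis_sum_bound + 1"],
    rule exI[of _ basis_sum_bound], intro allI impI, rule inexact_newton_slow_instance)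
  fix \<epsilon> :: real and \<theta> :: "nat \<Rightarrow> real^2"
  assume "0 < \<epsilon> \<and> \<epsilon> < 1 \<and> admissible_residuals \<kappa> \<theta>"
  then show "0 < \<epsilon>" "\<epsilon> < 1" "\<bar>\<theta> k $ 1\<bar> < 1" for k
    using assms(2) unfolding admissible_residuals_def by (auto intro: le_less_trans)
qed

end
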